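(* Let $R$ be the ring of integers of a nonarchimedean local field of characteristic not $2$ in which $2$ is a prime element. (a) For any unit $\epsilon\in R$, $\mathbb{H}\perp\langle\epsilon\rangle$ is isometric to $\langle 1,-1,\epsilon\rangle$. Hence $\mathbb{H}\perp\langle\epsilon\rangle$ primitively represents all binary $R$-lattices of the form $\langle\alpha,\epsilon\rangle$ with $\alpha\in R$; in particular, $\mathbb{H}\perp\langle\epsilon\rangle$ is primitively $1$-universal. (b) If an $R$-lattice $J$ primitively represents an $R$-lattice $K$ of rank $k$ and also primitively represents some unit of $R$, then for every $n\ge1$, $\mathbb{H}^n\perp J$ primitively represents all $R$-lattices of rank $n+k$ of the form $\ell\perp K$, where $\ell$ is any $R$-lattice of rank $n$. In particular, $\mathbb{H}^n\perp J$ is primitively $n$-universal.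
   Context: An $R$-lattice is a finitely generated $R$-submodule of a quadratic space $(V,B)$ over $F$ with $Q(v)=B(v,v)$, assumed integral ($B(L,L)\subseteq R$). $L$ primitively represents $\beta\in R$ if $\beta=Q(v)$ for some $v\in L$ with $Rv$ a direct summand. A representation is an $R$-linear map preserving $B$, primitive if its image is a direct summand; a lattice is primitively $n$-universal if it primitively represents every nondegenerate integral $R$-lattice of rank $n$. $\mathbb{H}$ is the binary lattice with Gram matrix $\begin{pmatrix}0&1\\1&0\end{pmatrix}$, $\mathbb{H}^n$ the orthogonal sum of $n$ copies, and $\langle a_1,\dots,a_k\rangle$ the lattice with Gram matrix $\operatorname{diag}(a_1,\dots,a_k)$. *)

theory Defs
  imports "Jordan_Normal_Form.Determinant" "HOL-Computational_Algebra.Factorial_Ring"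
begin

text \<open>The ring R (a type 'a) is the ring of integers of a nonarchimedean local field,
  i.e. a complete discrete valuation ring with finite residue field.\<close>
definition nonarch_local_int_ring :: "'a::idom itself \<Rightarrow> bool" where
  "nonarch_local_int_ring _ \<longleftrightarrow>
     (\<exists>\<pi>::'a. \<pi> \<noteq> 0 \<and> \<not> \<pi> dvd 1
        \<and> (\<forall>x. x \<noteq> 0 \<longrightarrow> (\<exists>u n. u dvd 1 \<and> x = u * \<pi> ^ n))
        \<and> (\<exists>S. finite S \<and> (\<forall>x. \<exists>s\<in>S. \<pi> dvd (x - s)))
        \<and> (\<forall>a::nat \<Rightarrow> 'a. (\<forall>n. \<pi> ^ n dvd (a (Suc n) - a n))
              \<longrightarrow> (\<exists>L. \<forall>n. \<pi> ^ n dvd (L - a n))))"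

text \<open>Lattices over the PID R are free; a lattice of rank n is given by its (symmetric,
  R-valued, hence integral) Gram matrix with respect to a basis.\<close>
definition is_lattice :: "nat \<Rightarrow> 'a::comm_ring_1 mat \<Rightarrow> bool" where
  "is_lattice n G \<longleftrightarrow> G \<in> carrier_mat n n \<and> transpose_mat G = G"

definition nondegenerate :: "'a::comm_ring_1 mat \<Rightarrow> bool" where
  "nondegenerate G \<longleftrightarrow> det G \<noteq> 0"

definition orth_sum :: "'a::comm_ring_1 mat \<Rightarrow> 'a mat \<Rightarrow> 'a mat" (infixr \<open>\<perp>\<^sub>L\<close> 65) where
  "A \<perp>\<^sub>L B = four_block_mat A (0\<^sub>m (dim_row A) (dim_col B)) (0\<^sub>m (dim_row B) (dim_col A)) B"

definition hyp_plane :: "'a::comm_ring_1 mat" where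
  "hyp_plane = mat 2 2 (\<lambda>(i, j). if i = j then 0 else 1)"

fun hyp_pow :: "nat \<Rightarrow> 'a::comm_ring_1 mat" where
  "hyp_pow 0 = 0\<^sub>m 0 0"
| "hyp_pow (Suc n) = hyp_plane \<perp>\<^sub>L hyp_pow n"

definition diag_lat :: "'a::comm_ring_1 list \<Rightarrow> 'a mat" where
  "diag_lat as = mat (length as) (length as) (\<lambda>(i, j). if i = j then as ! i else 0)"

definition is_submodule :: "nat \<Rightarrow> 'a::comm_ring_1 vec set \<Rightarrow> bool" where
  "is_submodule m C \<longleftrightarrow> C \<subseteq> carrier_vec m \<and> 0\<^sub>v m \<in> C
     \<and> (\<forall>x\<in>C. \<forall>y\<in>C. x + y \<in> C) \<and> (\<forall>r. \<forall>x\<in>C. r \<cdot>\<^sub>v x \<in> C)"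

definition direct_summand :: "nat \<Rightarrow> 'a::comm_ring_1 vec set \<Rightarrow> bool" where
  "direct_summand m M \<longleftrightarrow> (\<exists>C. is_submodule m C \<and> M \<inter> C = {0\<^sub>v m}
      \<and> (\<forall>w\<in>carrier_vec m. \<exists>a\<in>M. \<exists>c\<in>C. w = a + c))"

definition prim_rep :: "'a::comm_ring_1 mat \<Rightarrow> 'a mat \<Rightarrow> bool" where
  "prim_rep L K \<longleftrightarrow> (\<exists>X. X \<in> carrier_mat (dim_row L) (dim_row K)
      \<and> transpose_mat X * L * X = K
      \<and> direct_summand (dim_row L) ((\<lambda>u. X *\<^sub>v u) ` carrier_vec (dim_row K)))"

definition prim_rep_elem :: "'a::comm_ring_1 mat \<Rightarrow> 'a \<Rightarrow> bool" where
  "prim_rep_elem L \<beta> \<longleftrightarrow> (\<exists>v\<in>carrier_vec (dim_row L). v \<bullet> (L *\<^sub>v v) = \<beta>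
      \<and> direct_summand (dim_row L) {r \<cdot>\<^sub>v v | r. True})"

definition prim_universal :: "nat \<Rightarrow> 'a::comm_ring_1 mat \<Rightarrow> bool" where
  "prim_universal n L \<longleftrightarrow> (\<forall>K. is_lattice n K \<and> nondegenerate K \<longrightarrow> prim_rep L K)"

definition isometric :: "'a::comm_ring_1 mat \<Rightarrow> 'a mat \<Rightarrow> bool" where
  "isometric A B \<longleftrightarrow> (\<exists>X Y. X \<in> carrier_mat (dim_row A) (dim_row B)
      \<and> Y \<in> carrier_mat (dim_row B) (dim_row A)
      \<and> X * Y = 1\<^sub>m (dim_row A) \<and> Y * X = 1\<^sub>m (dim_row B)
      \<and> transpose_mat X * A * X = B)"

end

theory Submission
  imports Defs
begin

(*
  For a unit u of R every element is congruent modulo 2 to u times a square: R/2 is a finite ring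
  in which squaring is injective (2 being prime), hence bijective.

  Let v in J have norm u and let l be a lattice of rank n. Choose r_a with l_aa = u r_a^2 mod 2
  and write l - u r r^T = S + S^T. With (e_i, f_i) the hyperbolic pairs of H^n and (w_c) the basis
  of J, the vectors
    x_a = e_a + sum_i S_ia f_i + r_a v,   y_c = w_c - B(v, w_c) sum_i r_i f_i
  have Gram matrix l _|_ J, and the representation they define has a left inverse. Composing it
  with id_l _|_ (a primitive representation of K by J) gives a primitive representation of l _|_ K
  by H^n _|_ J; K = 0 gives universality, and J = K = <eps> gives part (a), where a solution of
  eps z^2 + 2 t = 1 also provides the explicit isometry H _|_ <eps> ~= <1, -1, eps>.
*)

section \<open>Orthogonal sums and Gram matrices\<close>

lemma orth_sum_carrier [simp]:
  "A \<in> carrier_mat nr1 nc1 \<Longrightarrow> B \<in> carrier_mat nr2 nc2 \<Longrightarrow>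
    A \<perp>\<^sub>L B \<in> carrier_mat (nr1 + nr2) (nc1 + nc2)"
  by (auto simp: orth_sum_def)

lemma orth_sum_eq_four_block:
  "A \<in> carrier_mat nr1 nc1 \<Longrightarrow> B \<in> carrier_mat nr2 nc2 \<Longrightarrow>
    A \<perp>\<^sub>L B = four_block_mat A (0\<^sub>m nr1 nc2) (0\<^sub>m nr2 nc1) B"
  unfolding orth_sum_def carrier_mat_def by auto

lemma orth_sum_mult_vec:
  assumes "A \<in> carrier_mat nr1 nc1" "B \<in> carrier_mat nr2 nc2"
    and "a \<in> carrier_vec nc1" "b \<in> carrier_vec nc2"
  shows "(A \<perp>\<^sub>L B) *\<^sub>v (a @\<^sub>v b) = (A *\<^sub>v a) @\<^sub>v (B *\<^sub>v b)"
proof -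
  have "(A \<perp>\<^sub>L B) *\<^sub>v (a @\<^sub>v b) = (A *\<^sub>v a + 0\<^sub>m nr1 nc2 *\<^sub>v b) @\<^sub>v (0\<^sub>m nr2 nc1 *\<^sub>v a + B *\<^sub>v b)"
    unfolding orth_sum_eq_four_block[OF assms(1,2)]
    by (rule four_block_mat_mult_vec) (use assms in auto)
  moreover have "0\<^sub>m nr1 nc2 *\<^sub>v b = 0\<^sub>v nr1" "0\<^sub>m nr2 nc1 *\<^sub>v a = 0\<^sub>v nr2"
    using assms by (auto simp: scalar_prod_def)
  ultimately show ?thesis using assms by simp
qed

lemma transpose_orth_sum:
  "transpose_mat (A \<perp>\<^sub>L B) = transpose_mat A \<perp>\<^sub>L transpose_mat B"
  by (rule eq_matI) (auto simp: orth_sum_def)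

lemma mult_orth_sum:
  assumes "A \<in> carrier_mat nr1 n1" "B \<in> carrier_mat nr2 n2"
    and "C \<in> carrier_mat n1 nc1" "D \<in> carrier_mat n2 nc2"
  shows "(A \<perp>\<^sub>L B) * (C \<perp>\<^sub>L D) = (A * C) \<perp>\<^sub>L (B * D)"
proof -
  have "(A \<perp>\<^sub>L B) * (C \<perp>\<^sub>L D) = four_block_mat (A * C + 0\<^sub>m nr1 n2 * 0\<^sub>m n2 nc1)
      (A * 0\<^sub>m n1 nc2 + 0\<^sub>m nr1 n2 * D) (0\<^sub>m nr2 n1 * C + B * 0\<^sub>m n2 nc1)
      (0\<^sub>m nr2 n1 * 0\<^sub>m n1 nc2 + B * D)"
    (is "_ = ?M")
    unfolding orth_sum_eq_four_block[OF assms(1,2)] orth_sum_eq_four_block[OF assms(3,4)]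
    by (rule mult_four_block_mat) (use assms in auto)
  also have "?M = four_block_mat (A * C) (0\<^sub>m nr1 nc2) (0\<^sub>m nr2 nc1) (B * D)"
    using assms by simp
  also have "\<dots> = (A * C) \<perp>\<^sub>L (B * D)"
    using assms by (intro orth_sum_eq_four_block[symmetric]) auto
  finally show ?thesis .
qed

lemma gram_orth_sum:
  assumes "X1 \<in> carrier_mat m1 k1" "X2 \<in> carrier_mat m2 k2"
    and "L1 \<in> carrier_mat m1 m1" "L2 \<in> carrier_mat m2 m2"
  shows "transpose_mat (X1 \<perp>\<^sub>L X2) * (L1 \<perp>\<^sub>L L2) * (X1 \<perp>\<^sub>L X2)
    = (transpose_mat X1 * L1 * X1) \<perp>\<^sub>L (transpose_mat X2 * L2 * X2)"
  using assms by (simp add: transpose_orth_sum mult_orth_sum[of _ k1 m1 _ k2 m2])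

lemma index_orth_sum:
  assumes "A \<in> carrier_mat nr1 nc1" "B \<in> carrier_mat nr2 nc2" "i < nr1 + nr2" "k < nc1 + nc2"
  shows "(A \<perp>\<^sub>L B) $$ (i, k) = (if i < nr1 then if k < nc1 then A $$ (i, k) else 0
    else if k < nc1 then 0 else B $$ (i - nr1, k - nc1))"
  using assms by (simp add: orth_sum_def)

lemma orth_sum_empty: "L \<in> carrier_mat n n \<Longrightarrow> L \<perp>\<^sub>L 0\<^sub>m 0 0 = L"
  by (intro eq_matI) (auto simp: orth_sum_def)

lemma orth_sum_form_append:
  assumes A: "A \<in> carrier_mat n1 n1" and B: "B \<in> carrier_mat n2 n2"
    and "x \<in> carrier_vec n1" "x' \<in> carrier_vec n1" "y \<in> carrier_vec n2" "y' \<in> carrier_vec n2"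
  shows "(x @\<^sub>v y) \<bullet> ((A \<perp>\<^sub>L B) *\<^sub>v (x' @\<^sub>v y')) = x \<bullet> (A *\<^sub>v x') + y \<bullet> (B *\<^sub>v y')"
proof -
  have "(A \<perp>\<^sub>L B) *\<^sub>v (x' @\<^sub>v y') = (A *\<^sub>v x') @\<^sub>v (B *\<^sub>v y')"
    using assms by (intro orth_sum_mult_vec[OF A B])
  moreover have "(x @\<^sub>v y) \<bullet> ((A *\<^sub>v x') @\<^sub>v (B *\<^sub>v y')) = x \<bullet> (A *\<^sub>v x') + y \<bullet> (B *\<^sub>v y')"
    using assms by (intro scalar_prod_append) auto
  ultimately show ?thesis by simp
qed

lemma gram_entry:
  assumes "Y \<in> carrier_mat m a" "L \<in> carrier_mat m m" "Z \<in> carrier_mat m b" "i < a" "j < b"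
  shows "(transpose_mat Y * L * Z) $$ (i, j) = col Y i \<bullet> (L *\<^sub>v col Z j)"
  using assms by (simp add: assoc_mult_mat[of "transpose_mat Y" a m L m Z b] mult_mat_vec_def)

lemma symmetric_form_commute:
  fixes J :: "'a::comm_ring_1 mat"
  assumes "J \<in> carrier_mat m m" "transpose_mat J = J" "x \<in> carrier_vec m" "y \<in> carrier_vec m"
  shows "x \<bullet> (J *\<^sub>v y) = y \<bullet> (J *\<^sub>v x)"
  using assms transpose_vec_mult_scalar[of J m m y x] comm_scalar_prod[of x m "J *\<^sub>v y"]
    comm_scalar_prod[of y m "J *\<^sub>v x"]
  by simp

lemma mult_mat_vec_smult:
  fixes A :: "'a::comm_ring_1 mat"
  shows "v \<in> carrier_vec (dim_col A) \<Longrightarrow> A *\<^sub>v (c \<cdot>\<^sub>v v) = c \<cdot>\<^sub>v (A *\<^sub>v v)"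
  by (intro eq_vecI) auto

lemma mult_mat_vec_zero [simp]: "A \<in> carrier_mat nr nc \<Longrightarrow> A *\<^sub>v 0\<^sub>v nc = 0\<^sub>v nr"
  by (intro eq_vecI) (auto simp: scalar_prod_def)

lemma gram_mult:
  fixes Z :: "'a::comm_ring_1 mat"
  assumes Z: "Z \<in> carrier_mat m p" and W: "W \<in> carrier_mat p k" and L: "L \<in> carrier_mat m m"
  shows "transpose_mat (Z * W) * L * (Z * W) = transpose_mat W * (transpose_mat Z * L * Z) * W"
proof -
  have ZT: "transpose_mat Z \<in> carrier_mat p m" and WT: "transpose_mat W \<in> carrier_mat k p"
    and ZTL: "transpose_mat Z * L \<in> carrier_mat p m"
    using Z W L by auto
  have "transpose_mat (Z * W) * L * (Z * W) = transpose_mat W * (transpose_mat Z * L) * (Z * W)"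
    by (simp add: transpose_mult[OF Z W] assoc_mult_mat[OF WT ZT L])
  also have "\<dots> = transpose_mat W * (transpose_mat Z * L * (Z * W))"
    using ZTL Z W by (simp add: assoc_mult_mat[OF WT ZTL, of _ k])
  also have "transpose_mat Z * L * (Z * W) = transpose_mat Z * L * Z * W"
    by (simp add: assoc_mult_mat[OF ZTL Z W])
  also have "transpose_mat W * (transpose_mat Z * L * Z * W)
      = transpose_mat W * (transpose_mat Z * L * Z) * W"
    using ZTL Z by (simp add: assoc_mult_mat[OF WT _ W, of "transpose_mat Z * L * Z"])
  finally show ?thesis .
qed

section \<open>The hyperbolic space\<close>

lemma hyp_pow_carrier [simp]: "hyp_pow n \<in> carrier_mat (2*n) (2*n)"
  by (induction n) (auto simp: orth_sum_def hyp_plane_def)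

lemma dim_hyp_pow: "dim_row (hyp_pow n) = 2*n" "dim_col (hyp_pow n) = 2*n"
  by (rule carrier_matD[OF hyp_pow_carrier])+

(* The vector sum_i (x i e_i + y i f_i), the hyperbolic pair (e_i, f_i) at coordinates 2i, 2i+1. *)
definition hyp_vec :: "nat \<Rightarrow> (nat \<Rightarrow> 'a) \<Rightarrow> (nat \<Rightarrow> 'a) \<Rightarrow> 'a vec" where
  "hyp_vec n x y = vec (2*n) (\<lambda>p. if even p then x (p div 2) else y (p div 2))"

lemma hyp_vec_carrier [simp]:
  "hyp_vec n x y \<in> carrier_vec (2*n)" "dim_vec (hyp_vec n x y) = 2*n"
  by (simp_all add: hyp_vec_def)

lemma hyp_vec_Suc:
  "hyp_vec (Suc n) x y
    = vec 2 (\<lambda>p. if p = 0 then x 0 else y 0) @\<^sub>v hyp_vec n (\<lambda>i. x (Suc i)) (\<lambda>i. y (Suc i))"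
    (is "_ = ?v")
proof (rule eq_vecI)
  fix p assume "p < dim_vec ?v"
  then show "hyp_vec (Suc n) x y $ p = ?v $ p"
  proof (cases p)
    case (Suc q)
    then show ?thesis using \<open>p < dim_vec ?v\<close> by (cases q) (auto simp: hyp_vec_def)
  qed (simp add: hyp_vec_def)
qed (simp add: hyp_vec_def)

lemma hyp_pow_mult_hyp_vec: "hyp_pow n *\<^sub>v hyp_vec n x y = hyp_vec n y x"
proof (induction n arbitrary: x y)
  case 0
  show ?case by (auto simp: hyp_vec_def)
next
  case (Suc n)
  have "hyp_plane *\<^sub>v vec 2 (\<lambda>p. if p = 0 then a else b) = vec 2 (\<lambda>p. if p = 0 then b else a)"
    for a b :: 'a
    by (intro eq_vecI)
      (auto simp: hyp_plane_def scalar_prod_def numeral_2_eq_2 atLeast0LessThan less_Suc_eq)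
  then show ?case
    by (simp add: hyp_vec_Suc orth_sum_mult_vec[of _ 2 2 _ "2*n" "2*n"] Suc.IH hyp_plane_def)
qed

lemma scalar_prod_hyp_vec:
  "hyp_vec n x y \<bullet> hyp_vec n x' y' = (\<Sum>i<n. x i * x' i + y i * y' i)"
proof (induction n arbitrary: x y x' y')
  case (Suc n)
  then show ?case
    by (simp add: hyp_vec_Suc scalar_prod_append[of _ 2 _ "2*n"] sum.lessThan_Suc_shift
        scalar_prod_def numeral_2_eq_2 atLeast0LessThan add.assoc del: sum.lessThan_Suc)
qed (simp add: hyp_vec_def)

lemma hyp_pow_form_hyp_vec:
  "hyp_vec n x y \<bullet> (hyp_pow n *\<^sub>v hyp_vec n x' y') = (\<Sum>i<n. x i * y' i + y i * x' i)"
  by (simp add: hyp_pow_mult_hyp_vec scalar_prod_hyp_vec)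

section \<open>Direct summands and primitive representations\<close>

lemma smult_append_vec: "c \<cdot>\<^sub>v (a @\<^sub>v b) = (c \<cdot>\<^sub>v a) @\<^sub>v (c \<cdot>\<^sub>v b)"
  by (rule eq_vecI) auto

lemma is_submodule_append:
  assumes C1: "is_submodule m1 C1" and C2: "is_submodule m2 C2"
  shows "is_submodule (m1 + m2) {a @\<^sub>v b | a b. a \<in> C1 \<and> b \<in> C2}"
    (is "is_submodule _ ?C")
proof -
  have C1c: "C1 \<subseteq> carrier_vec m1" and C2c: "C2 \<subseteq> carrier_vec m2"
    using C1 C2 by (simp_all add: is_submodule_def)
  have "0\<^sub>v (m1 + m2) = 0\<^sub>v m1 @\<^sub>v 0\<^sub>v m2" by auto
  then have zero: "0\<^sub>v (m1 + m2) \<in> ?C"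
    using C1 C2 by (auto simp: is_submodule_def)
  have add: "(a @\<^sub>v b) + (a' @\<^sub>v b') \<in> ?C"
    if "a \<in> C1" "b \<in> C2" "a' \<in> C1" "b' \<in> C2" for a b a' b'
  proof -
    have "(a @\<^sub>v b) + (a' @\<^sub>v b') = (a + a') @\<^sub>v (b + b')"
      using that C1c C2c by (intro append_vec_add) auto
    moreover have "a + a' \<in> C1" "b + b' \<in> C2"
      using that C1 C2 by (simp_all add: is_submodule_def)
    ultimately show ?thesis by blast
  qed
  have smult: "r \<cdot>\<^sub>v (a @\<^sub>v b) \<in> ?C" if "a \<in> C1" "b \<in> C2" for r a b
  proof -
    have "r \<cdot>\<^sub>v a \<in> C1" "r \<cdot>\<^sub>v b \<in> C2"
      using that C1 C2 by (simp_all add: is_submodule_def)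
    then show ?thesis unfolding smult_append_vec by blast
  qed
  have "?C \<subseteq> carrier_vec (m1 + m2)" using C1c C2c by auto
  moreover have "\<forall>x\<in>?C. \<forall>y\<in>?C. x + y \<in> ?C" using add by blast
  moreover have "\<forall>r. \<forall>x\<in>?C. r \<cdot>\<^sub>v x \<in> ?C" using smult by blast
  ultimately show ?thesis unfolding is_submodule_def using zero by blast
qed

lemma append_set_inter:
  assumes "M1 \<subseteq> carrier_vec m1" "C1 \<subseteq> carrier_vec m1"
    and M1C1: "M1 \<inter> C1 = {0\<^sub>v m1}" and M2C2: "M2 \<inter> C2 = {0\<^sub>v m2}"
  shows "{a @\<^sub>v b | a b. a \<in> M1 \<and> b \<in> M2} \<inter> {a @\<^sub>v b | a b. a \<in> C1 \<and> b \<in> C2} = {0\<^sub>v (m1 + m2)}"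
    (is "?M \<inter> ?C = _")
proof -
  have zero: "0\<^sub>v (m1 + m2) = 0\<^sub>v m1 @\<^sub>v 0\<^sub>v m2" by auto
  have eq: "x = 0\<^sub>v (m1 + m2)" if x_in: "x \<in> ?M \<inter> ?C" for x
  proof -
    obtain a b c d where x: "x = a @\<^sub>v b" "a @\<^sub>v b = c @\<^sub>v d"
      and abcd: "a \<in> M1" "b \<in> M2" "c \<in> C1" "d \<in> C2"
      using x_in by blast
    have "a = c" "b = d"
      using x(2) append_vec_eq[of a m1 c b d] abcd assms(1,2) by auto
    then have "a = 0\<^sub>v m1" "b = 0\<^sub>v m2" using abcd M1C1 M2C2 by blast+
    then show ?thesis unfolding zero using x(1) by simp
  qed
  have "0\<^sub>v m1 \<in> M1 \<inter> C1" "0\<^sub>v m2 \<in> M2 \<inter> C2" using M1C1 M2C2 by blast+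
  then have zero_in: "0\<^sub>v (m1 + m2) \<in> ?M \<inter> ?C" unfolding zero by blast
  show ?thesis
  proof (intro equalityI subsetI)
    fix x assume "x \<in> ?M \<inter> ?C"
    then show "x \<in> {0\<^sub>v (m1 + m2)}" using eq by simp
  next
    fix x :: "'a vec" assume "x \<in> {0\<^sub>v (m1 + m2)}"
    then show "x \<in> ?M \<inter> ?C" using zero_in by simp
  qed
qed

lemma direct_summand_append:
  assumes M1: "direct_summand m1 M1" "M1 \<subseteq> carrier_vec m1"
    and M2: "direct_summand m2 M2" "M2 \<subseteq> carrier_vec m2"
  shows "direct_summand (m1 + m2) {a @\<^sub>v b | a b. a \<in> M1 \<and> b \<in> M2}"
proof -
  obtain C1 where C1: "is_submodule m1 C1" "M1 \<inter> C1 = {0\<^sub>v m1}"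
    "\<forall>w\<in>carrier_vec m1. \<exists>a\<in>M1. \<exists>c\<in>C1. w = a + c"
    using M1 unfolding direct_summand_def by blast
  obtain C2 where C2: "is_submodule m2 C2" "M2 \<inter> C2 = {0\<^sub>v m2}"
    "\<forall>w\<in>carrier_vec m2. \<exists>a\<in>M2. \<exists>c\<in>C2. w = a + c"
    using M2 unfolding direct_summand_def by blast
  have C1c: "C1 \<subseteq> carrier_vec m1" and C2c: "C2 \<subseteq> carrier_vec m2"
    using C1(1) C2(1) by (simp_all add: is_submodule_def)
  let ?M = "{a @\<^sub>v b | a b. a \<in> M1 \<and> b \<in> M2}"
  let ?C = "{a @\<^sub>v b | a b. a \<in> C1 \<and> b \<in> C2}"
  have span: "\<exists>a\<in>?M. \<exists>c\<in>?C. w = a + c" if w: "w \<in> carrier_vec (m1 + m2)" for w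
  proof -
    obtain a1 c1 where a1c1: "a1 \<in> M1" "c1 \<in> C1" "vec_first w m1 = a1 + c1"
      using C1(3) vec_first_carrier by blast
    obtain a2 c2 where a2c2: "a2 \<in> M2" "c2 \<in> C2" "vec_last w m2 = a2 + c2"
      using C2(3) vec_last_carrier by blast
    have "w = (a1 + c1) @\<^sub>v (a2 + c2)"
      using vec_first_last_append[OF w] a1c1(3) a2c2(3) by metis
    also have "\<dots> = (a1 @\<^sub>v a2) + (c1 @\<^sub>v c2)"
      using a1c1 a2c2 M1(2) M2(2) C1c C2c by (intro append_vec_add[symmetric]) auto
    finally show ?thesis using a1c1 a2c2 by blast
  qed
  show ?thesis
    unfolding direct_summand_def
  proof (intro exI[of _ ?C] conjI ballI)
    show "is_submodule (m1 + m2) ?C" by (rule is_submodule_append[OF C1(1) C2(1)])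
    show "?M \<inter> ?C = {0\<^sub>v (m1 + m2)}" by (rule append_set_inter[OF M1(2) C1c C1(2) C2(2)])
  qed (erule span)
qed

lemma direct_summand_carrier_vec: "direct_summand m (carrier_vec m)"
  unfolding direct_summand_def is_submodule_def
  by (intro exI[of _ "{0\<^sub>v m}"]) (auto intro!: bexI[of _ "0\<^sub>v m"])

lemma direct_summand_zero: "direct_summand m {0\<^sub>v m}"
  unfolding direct_summand_def is_submodule_def
  by (intro exI[of _ "carrier_vec m"]) auto

lemma is_submodule_preimage:
  fixes Y :: "'a::comm_ring_1 mat"
  assumes Y: "Y \<in> carrier_mat p m" and C: "is_submodule p C"
  shows "is_submodule m {d \<in> carrier_vec m. Y *\<^sub>v d \<in> C}"
  using C Y unfolding is_submodule_def by (auto simp: mult_add_distrib_mat_vec mult_mat_vec_smult)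

lemma direct_summand_image_mult:
  fixes Z :: "'a::comm_ring_1 mat"
  assumes Z: "Z \<in> carrier_mat m p" and Y: "Y \<in> carrier_mat p m" "Y * Z = 1\<^sub>m p"
    and W: "W \<in> carrier_mat p k" "direct_summand p ((\<lambda>u. W *\<^sub>v u) ` carrier_vec k)"
  shows "direct_summand m ((\<lambda>u. (Z * W) *\<^sub>v u) ` carrier_vec k)"
proof -
  obtain C where C: "is_submodule p C" "(\<lambda>u. W *\<^sub>v u) ` carrier_vec k \<inter> C = {0\<^sub>v p}"
    "\<forall>w\<in>carrier_vec p. \<exists>a\<in>(\<lambda>u. W *\<^sub>v u) ` carrier_vec k. \<exists>c\<in>C. w = a + c"
    using W(2) unfolding direct_summand_def by blast
  have YZ: "Y *\<^sub>v (Z *\<^sub>v x) = x" if "x \<in> carrier_vec p" for x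
    using that Y Z by (metis assoc_mult_mat_vec one_mult_mat_vec)
  let ?C = "{d \<in> carrier_vec m. Y *\<^sub>v d \<in> C}"
  have sub: "is_submodule m ?C" by (rule is_submodule_preimage[OF Y(1) C(1)])
  moreover have "(\<lambda>u. (Z * W) *\<^sub>v u) ` carrier_vec k \<inter> ?C = {0\<^sub>v m}"
  proof (intro equalityI subsetI)
    fix x assume "x \<in> (\<lambda>u. (Z * W) *\<^sub>v u) ` carrier_vec k \<inter> ?C"
    then obtain u where u: "u \<in> carrier_vec k" "x = Z *\<^sub>v (W *\<^sub>v u)" "Y *\<^sub>v x \<in> C"
      using Z W(1) by auto
    then have "W *\<^sub>v u \<in> (\<lambda>u. W *\<^sub>v u) ` carrier_vec k \<inter> C"
      using YZ W(1) by auto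
    then have "W *\<^sub>v u = 0\<^sub>v p" using C(2) by blast
    then show "x \<in> {0\<^sub>v m}" using u(2) Z by auto
  next
    fix x :: "'a vec" assume "x \<in> {0\<^sub>v m}"
    moreover have "(Z * W) *\<^sub>v 0\<^sub>v k = 0\<^sub>v m" "0\<^sub>v m \<in> ?C"
      using Z W(1) sub by (auto simp: is_submodule_def)
    ultimately show "x \<in> (\<lambda>u. (Z * W) *\<^sub>v u) ` carrier_vec k \<inter> ?C"
      by (metis IntI image_eqI singletonD zero_carrier_vec)
  qed
  moreover have "\<exists>a\<in>(\<lambda>u. (Z * W) *\<^sub>v u) ` carrier_vec k. \<exists>c\<in>?C. w = a + c"
    if w: "w \<in> carrier_vec m" for w
  proof -
    obtain u c where u: "u \<in> carrier_vec k" "c \<in> C" "Y *\<^sub>v w = W *\<^sub>v u + c"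
      using C(3) Y(1) w by fastforce
    have c: "c \<in> carrier_vec p" using u(2) C(1) by (auto simp: is_submodule_def)
    have "Y *\<^sub>v (w - (Z * W) *\<^sub>v u) = (W *\<^sub>v u + c) - W *\<^sub>v u"
      using u w Y Z W(1) YZ by (simp add: mult_minus_distrib_mat_vec)
    also have "\<dots> = c" using c W(1) u(1) by (intro eq_vecI) auto
    finally have "Y *\<^sub>v (w - (Z * W) *\<^sub>v u) = c" .
    then have "w - (Z * W) *\<^sub>v u \<in> ?C" using u w Z W(1) by auto
    moreover have "w = (Z * W) *\<^sub>v u + (w - (Z * W) *\<^sub>v u)" using w Z W(1) by auto
    ultimately show ?thesis using u(1) by blast
  qed
  ultimately show ?thesis unfolding direct_summand_def by blast
qed

lemma image_mult_orth_sum: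
  assumes X1: "X1 \<in> carrier_mat m1 k1" and X2: "X2 \<in> carrier_mat m2 k2"
  shows "(\<lambda>u. (X1 \<perp>\<^sub>L X2) *\<^sub>v u) ` carrier_vec (k1 + k2)
    = {a @\<^sub>v b | a b. a \<in> (\<lambda>u. X1 *\<^sub>v u) ` carrier_vec k1 \<and> b \<in> (\<lambda>u. X2 *\<^sub>v u) ` carrier_vec k2}"
    (is "?I = ?A")
proof (intro equalityI subsetI)
  fix x assume "x \<in> ?I"
  then obtain u where u: "u \<in> carrier_vec (k1 + k2)" "x = (X1 \<perp>\<^sub>L X2) *\<^sub>v u" by blast
  define u1 u2 where "u1 = vec_first u k1" and "u2 = vec_last u k2"
  have "u = u1 @\<^sub>v u2" unfolding u1_def u2_def using u(1) by simp
  moreover have "u1 \<in> carrier_vec k1" "u2 \<in> carrier_vec k2" unfolding u1_def u2_def by simp_all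
  ultimately have "x = (X1 *\<^sub>v u1) @\<^sub>v (X2 *\<^sub>v u2)"
    using u(2) orth_sum_mult_vec[OF X1 X2] by simp
  moreover have "X1 *\<^sub>v u1 \<in> (\<lambda>u. X1 *\<^sub>v u) ` carrier_vec k1" "X2 *\<^sub>v u2 \<in> (\<lambda>u. X2 *\<^sub>v u) ` carrier_vec k2"
    unfolding u1_def u2_def by simp_all
  ultimately show "x \<in> ?A" by blast
next
  fix x assume "x \<in> ?A"
  then obtain u1 u2 where u: "u1 \<in> carrier_vec k1" "u2 \<in> carrier_vec k2"
    and x: "x = (X1 *\<^sub>v u1) @\<^sub>v (X2 *\<^sub>v u2)"
    by blast
  have "x = (X1 \<perp>\<^sub>L X2) *\<^sub>v (u1 @\<^sub>v u2)" unfolding x using orth_sum_mult_vec[OF X1 X2 u] ..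
  moreover have "u1 @\<^sub>v u2 \<in> carrier_vec (k1 + k2)" using u by simp
  ultimately show "x \<in> ?I" by blast
qed

lemma prim_rep_orth_sum:
  assumes L1: "L1 \<in> carrier_mat m1 m1" "prim_rep L1 K1"
    and L2: "L2 \<in> carrier_mat m2 m2" "prim_rep L2 K2"
  shows "prim_rep (L1 \<perp>\<^sub>L L2) (K1 \<perp>\<^sub>L K2)"
proof -
  define k1 k2 where "k1 = dim_row K1" and "k2 = dim_row K2"
  have dimL: "dim_row L1 = m1" "dim_row L2 = m2" using L1(1) L2(1) by simp_all
  obtain X1 where X1: "X1 \<in> carrier_mat m1 k1" "transpose_mat X1 * L1 * X1 = K1"
    "direct_summand m1 ((\<lambda>u. X1 *\<^sub>v u) ` carrier_vec k1)"
    using L1(2) unfolding prim_rep_def dimL k1_def by blast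
  obtain X2 where X2: "X2 \<in> carrier_mat m2 k2" "transpose_mat X2 * L2 * X2 = K2"
    "direct_summand m2 ((\<lambda>u. X2 *\<^sub>v u) ` carrier_vec k2)"
    using L2(2) unfolding prim_rep_def dimL k2_def by blast
  have dims: "dim_row (L1 \<perp>\<^sub>L L2) = m1 + m2" "dim_row (K1 \<perp>\<^sub>L K2) = k1 + k2"
    using L1(1) L2(1) by (simp_all add: orth_sum_def k1_def k2_def)
  show ?thesis
    unfolding prim_rep_def dims
  proof (intro exI[of _ "X1 \<perp>\<^sub>L X2"] conjI)
    show "X1 \<perp>\<^sub>L X2 \<in> carrier_mat (m1 + m2) (k1 + k2)" using X1(1) X2(1) by simp
    show "transpose_mat (X1 \<perp>\<^sub>L X2) * (L1 \<perp>\<^sub>L L2) * (X1 \<perp>\<^sub>L X2) = K1 \<perp>\<^sub>L K2"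
      using gram_orth_sum[OF X1(1) X2(1) L1(1) L2(1)] X1(2) X2(2) by simp
    have "(\<lambda>u. X1 *\<^sub>v u) ` carrier_vec k1 \<subseteq> carrier_vec m1"
      "(\<lambda>u. X2 *\<^sub>v u) ` carrier_vec k2 \<subseteq> carrier_vec m2"
      using X1(1) X2(1) by auto
    then show "direct_summand (m1 + m2) ((\<lambda>u. (X1 \<perp>\<^sub>L X2) *\<^sub>v u) ` carrier_vec (k1 + k2))"
      unfolding image_mult_orth_sum[OF X1(1) X2(1)]
      using X1(3) X2(3) by (intro direct_summand_append)
  qed
qed

lemma prim_rep_refl:
  fixes L :: "'a::comm_ring_1 mat"
  assumes "L \<in> carrier_mat m m"
  shows "prim_rep L L"
proof -
  have "(\<lambda>u. (1\<^sub>m m :: 'a mat) *\<^sub>v u) ` carrier_vec m = carrier_vec m"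
    by (auto simp: image_iff)
  then show ?thesis
    unfolding prim_rep_def using assms direct_summand_carrier_vec[of m]
    by (intro exI[of _ "1\<^sub>m m"]) auto
qed

lemma prim_rep_zero:
  fixes L :: "'a::comm_ring_1 mat"
  assumes "L \<in> carrier_mat m m"
  shows "prim_rep L (0\<^sub>m 0 0)"
proof -
  have "(0\<^sub>m m 0 :: 'a mat) *\<^sub>v u = 0\<^sub>v m" if "u \<in> carrier_vec 0" for u
    using that by (intro eq_vecI) (auto simp: scalar_prod_def)
  then have "(\<lambda>u. (0\<^sub>m m 0 :: 'a mat) *\<^sub>v u) ` carrier_vec 0 = {0\<^sub>v m}"
    by (auto simp: image_iff) (meson zero_carrier_vec)
  then show ?thesis
    unfolding prim_rep_def using assms direct_summand_zero[of m]
    by (intro exI[of _ "0\<^sub>m m 0"]) auto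
qed

(* Primitive representations need not compose, as the first one need not be injective;
   composing with a representation that has a left inverse preserves primitivity. *)
definition split_rep :: "'a::comm_ring_1 mat \<Rightarrow> 'a mat \<Rightarrow> bool" where
  "split_rep L M \<longleftrightarrow> (\<exists>Z Y. Z \<in> carrier_mat (dim_row L) (dim_row M)
      \<and> Y \<in> carrier_mat (dim_row M) (dim_row L) \<and> Y * Z = 1\<^sub>m (dim_row M)
      \<and> transpose_mat Z * L * Z = M)"

lemma prim_rep_trans_split_rep:
  assumes L: "L \<in> carrier_mat m m" and "split_rep L M" "prim_rep M K"
  shows "prim_rep L K"
proof -
  define p k where "p = dim_row M" and "k = dim_row K"
  have dimL: "dim_row L = m" using L by simp
  obtain Z Y where Z: "Z \<in> carrier_mat m p" "Y \<in> carrier_mat p m" "Y * Z = 1\<^sub>m p"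
    "transpose_mat Z * L * Z = M"
    using \<open>split_rep L M\<close> unfolding split_rep_def dimL p_def by blast
  obtain W where W: "W \<in> carrier_mat p k" "transpose_mat W * M * W = K"
    "direct_summand p ((\<lambda>u. W *\<^sub>v u) ` carrier_vec k)"
    using \<open>prim_rep M K\<close> unfolding prim_rep_def p_def k_def by blast
  show ?thesis
    unfolding prim_rep_def dimL k_def[symmetric]
  proof (intro exI[of _ "Z * W"] conjI)
    show "Z * W \<in> carrier_mat m k" using Z(1) W(1) by simp
    show "transpose_mat (Z * W) * L * (Z * W) = K"
      using gram_mult[OF Z(1) W(1) L] Z(4) W(2) by simp
    show "direct_summand m ((\<lambda>u. (Z * W) *\<^sub>v u) ` carrier_vec k)"
      by (rule direct_summand_image_mult[OF Z(1-3) W(1,3)])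
  qed
qed

section \<open>A split representation of l \<perp> J by H^n \<perp> J\<close>

lemma sum_of_bool_eq_mult [simp]:
  fixes a n :: nat
  shows "(\<Sum>i<n. of_bool (i = a) * f i) = of_bool (a < n) * (f a :: 'a::comm_semiring_1)"
  by (induction n) auto

lemma sum_mult_of_bool_eq [simp]:
  fixes a n :: nat
  shows "(\<Sum>i<n. f i * of_bool (i = a)) = of_bool (a < n) * (f a :: 'a::comm_semiring_1)"
  by (induction n) auto

lemma less_add_cases:
  fixes a n j :: nat
  assumes "a < n + j"
  obtains "a < n" | c where "a = n + c" "c < j"
  using assms by (metis add_diff_inverse_nat add_less_cancel_left)

(* Columns x_b (b < n) and y_c (= column n + c) of the header, with B(v, w_c) = (J v)_c. *)
definition hyp_twist_col ::
    "nat \<Rightarrow> 'a::comm_ring_1 mat \<Rightarrow> 'a vec \<Rightarrow> (nat \<Rightarrow> 'a) \<Rightarrow> (nat \<Rightarrow> nat \<Rightarrow> 'a) \<Rightarrow> nat \<Rightarrow> 'a vec"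
  where "hyp_twist_col n J v r S b =
    (if b < n then hyp_vec n (\<lambda>i. of_bool (i = b)) (\<lambda>i. S i b) @\<^sub>v (r b \<cdot>\<^sub>v v)
     else hyp_vec n (\<lambda>_. 0) (\<lambda>i. - (r i * (J *\<^sub>v v) $ (b - n))) @\<^sub>v unit_vec (dim_row J) (b - n))"

definition hyp_twist ::
    "nat \<Rightarrow> 'a::comm_ring_1 mat \<Rightarrow> 'a vec \<Rightarrow> (nat \<Rightarrow> 'a) \<Rightarrow> (nat \<Rightarrow> nat \<Rightarrow> 'a) \<Rightarrow> 'a mat"
  where "hyp_twist n J v r S =
    mat_of_cols (2*n + dim_row J) (map (hyp_twist_col n J v r S) [0..<n + dim_row J])"

(* Rows of a left inverse: the e-coordinates, and the J-part with the r_a v removed again. *)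
definition hyp_twist_inv_row :: "nat \<Rightarrow> nat \<Rightarrow> 'a::comm_ring_1 vec \<Rightarrow> (nat \<Rightarrow> 'a) \<Rightarrow> nat \<Rightarrow> 'a vec"
  where "hyp_twist_inv_row n j v r a =
    (if a < n then hyp_vec n (\<lambda>i. of_bool (i = a)) (\<lambda>_. 0) @\<^sub>v 0\<^sub>v j
     else hyp_vec n (\<lambda>i. - (r i * v $ (a - n))) (\<lambda>_. 0) @\<^sub>v unit_vec j (a - n))"

definition hyp_twist_inv :: "nat \<Rightarrow> nat \<Rightarrow> 'a::comm_ring_1 vec \<Rightarrow> (nat \<Rightarrow> 'a) \<Rightarrow> 'a mat"
  where "hyp_twist_inv n j v r =
    mat_of_rows (2*n + j) (map (hyp_twist_inv_row n j v r) [0..<n + j])"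

context
  fixes J :: "'a::comm_ring_1 mat" and v :: "'a vec" and n j :: nat
  assumes J: "J \<in> carrier_mat j j" and v: "v \<in> carrier_vec j"
begin

lemma hyp_twist_carrier: "hyp_twist n J v r S \<in> carrier_mat (2*n + j) (n + j)"
  using mat_of_cols_carrier(1)[of "2*n + j" "map (hyp_twist_col n J v r S) [0..<n + j]"] J
  unfolding hyp_twist_def by simp

lemma hyp_twist_inv_carrier: "hyp_twist_inv n j v r \<in> carrier_mat (n + j) (2*n + j)"
  using mat_of_rows_carrier(1)[of "2*n + j" "map (hyp_twist_inv_row n j v r) [0..<n + j]"]
  unfolding hyp_twist_inv_def by simp

lemma col_hyp_twist:
  "b < n \<Longrightarrow> col (hyp_twist n J v r S) b
     = hyp_vec n (\<lambda>i. of_bool (i = b)) (\<lambda>i. S i b) @\<^sub>v (r b \<cdot>\<^sub>v v)"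
  "c < j \<Longrightarrow> col (hyp_twist n J v r S) (n + c)
     = hyp_vec n (\<lambda>_. 0) (\<lambda>i. - (r i * (J *\<^sub>v v) $ c)) @\<^sub>v unit_vec j c"
proof -
  have col: "col (hyp_twist n J v r S) b = hyp_twist_col n J v r S b" if "b < n + j" for b
  proof -
    have "hyp_twist_col n J v r S b \<in> carrier_vec (2*n + j)"
      using J v unfolding hyp_twist_col_def by auto
    then show ?thesis using that J unfolding hyp_twist_def by simp
  qed
  show "b < n \<Longrightarrow> col (hyp_twist n J v r S) b
     = hyp_vec n (\<lambda>i. of_bool (i = b)) (\<lambda>i. S i b) @\<^sub>v (r b \<cdot>\<^sub>v v)"
    using col[of b] by (simp add: hyp_twist_col_def)
  show "c < j \<Longrightarrow> col (hyp_twist n J v r S) (n + c)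
     = hyp_vec n (\<lambda>_. 0) (\<lambda>i. - (r i * (J *\<^sub>v v) $ c)) @\<^sub>v unit_vec j c"
    using col[of "n + c"] J by (simp add: hyp_twist_col_def)
qed

lemma row_hyp_twist_inv:
  "a < n \<Longrightarrow> row (hyp_twist_inv n j v r) a
     = hyp_vec n (\<lambda>i. of_bool (i = a)) (\<lambda>_. 0) @\<^sub>v 0\<^sub>v j"
  "c < j \<Longrightarrow> row (hyp_twist_inv n j v r) (n + c)
     = hyp_vec n (\<lambda>i. - (r i * v $ c)) (\<lambda>_. 0) @\<^sub>v unit_vec j c"
proof -
  have row: "row (hyp_twist_inv n j v r) a = hyp_twist_inv_row n j v r a" if "a < n + j" for a
  proof -
    have "hyp_twist_inv_row n j v r a \<in> carrier_vec (2*n + j)"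
      unfolding hyp_twist_inv_row_def by auto
    then show ?thesis using that unfolding hyp_twist_inv_def by simp
  qed
  show "a < n \<Longrightarrow> row (hyp_twist_inv n j v r) a
     = hyp_vec n (\<lambda>i. of_bool (i = a)) (\<lambda>_. 0) @\<^sub>v 0\<^sub>v j"
    using row[of a] by (simp add: hyp_twist_inv_row_def)
  show "c < j \<Longrightarrow> row (hyp_twist_inv n j v r) (n + c)
     = hyp_vec n (\<lambda>i. - (r i * v $ c)) (\<lambda>_. 0) @\<^sub>v unit_vec j c"
    using row[of "n + c"] by (simp add: hyp_twist_inv_row_def)
qed

lemma hyp_twist_left_inverse: "hyp_twist_inv n j v r * hyp_twist n J v r S = 1\<^sub>m (n + j)"
proof (rule eq_matI)
  fix a b assume "a < dim_row (1\<^sub>m (n + j) :: 'a mat)" "b < dim_col (1\<^sub>m (n + j) :: 'a mat)"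
  then have ab: "a < n + j" "b < n + j" by simp_all
  have "(hyp_twist_inv n j v r * hyp_twist n J v r S) $$ (a, b)
      = row (hyp_twist_inv n j v r) a \<bullet> col (hyp_twist n J v r S) b"
    using ab carrier_matD[OF hyp_twist_carrier] carrier_matD[OF hyp_twist_inv_carrier] by simp
  also have "\<dots> = (1\<^sub>m (n + j) :: 'a mat) $$ (a, b)"
    by (rule less_add_cases[OF ab(1)]; rule less_add_cases[OF ab(2)])
      (use v in \<open>simp_all add: row_hyp_twist_inv col_hyp_twist scalar_prod_append[of _ "2*n" _ j]
          scalar_prod_hyp_vec sum_negf\<close>)
  finally show "(hyp_twist_inv n j v r * hyp_twist n J v r S) $$ (a, b)
      = (1\<^sub>m (n + j) :: 'a mat) $$ (a, b)" .
qed (use carrier_matD[OF hyp_twist_carrier] carrier_matD[OF hyp_twist_inv_carrier] in simp_all)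

(* The B(v, w_c)-correction in y_c cancels the cross term r_a B(v, w_c) between x_a and y_c. *)
lemma gram_hyp_twist:
  assumes Js: "transpose_mat J = J" and l: "l \<in> carrier_mat n n"
    and S: "\<And>a b. a < n \<Longrightarrow> b < n \<Longrightarrow> S a b + S b a + r a * r b * (v \<bullet> (J *\<^sub>v v)) = l $$ (a, b)"
  shows "transpose_mat (hyp_twist n J v r S) * (hyp_pow n \<perp>\<^sub>L J) * hyp_twist n J v r S = l \<perp>\<^sub>L J"
proof (rule eq_matI)
  fix a b assume "a < dim_row (l \<perp>\<^sub>L J)" "b < dim_col (l \<perp>\<^sub>L J)"
  then have ab: "a < n + j" "b < n + j" using l J by (simp_all add: orth_sum_def)
  have form: "(h @\<^sub>v w) \<bullet> ((hyp_pow n \<perp>\<^sub>L J) *\<^sub>v (h' @\<^sub>v w'))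
      = h \<bullet> (hyp_pow n *\<^sub>v h') + w \<bullet> (J *\<^sub>v w')"
    if "h \<in> carrier_vec (2*n)" "h' \<in> carrier_vec (2*n)" "w \<in> carrier_vec j" "w' \<in> carrier_vec j"
    for h h' w w'
    using orth_sum_form_append[OF hyp_pow_carrier J that(1,2,3,4)] .
  have vJ: "v \<bullet> (J *\<^sub>v unit_vec j c) = (J *\<^sub>v v) $ c" if "c < j" for c
    using symmetric_form_commute[OF J Js v unit_vec_carrier] that J v by simp
  have "(transpose_mat (hyp_twist n J v r S) * (hyp_pow n \<perp>\<^sub>L J) * hyp_twist n J v r S) $$ (a, b)
      = col (hyp_twist n J v r S) a \<bullet> ((hyp_pow n \<perp>\<^sub>L J) *\<^sub>v col (hyp_twist n J v r S) b)"
    using orth_sum_carrier[OF hyp_pow_carrier J]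
    by (rule gram_entry[OF hyp_twist_carrier _ hyp_twist_carrier ab])
  also have "\<dots> = (l \<perp>\<^sub>L J) $$ (a, b)"
  proof (cases rule: less_add_cases[OF ab(1)])
    case a: 1
    show ?thesis
    proof (cases rule: less_add_cases[OF ab(2)])
      case 1
      have "(r a \<cdot>\<^sub>v v) \<bullet> (J *\<^sub>v (r b \<cdot>\<^sub>v v)) = r a * r b * (v \<bullet> (J *\<^sub>v v))"
        using J v by (simp add: mult_mat_vec_smult)
      then show ?thesis
        using a 1 J v
        by (simp add: col_hyp_twist form hyp_pow_form_hyp_vec index_orth_sum[OF l J] sum.distrib S)
    next
      case (2 c)
      then show ?thesis
        using a J v vJ
        by (simp add: col_hyp_twist form hyp_pow_form_hyp_vec index_orth_sum[OF l J] sum_negf)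
    qed
  next
    case (2 c)
    show ?thesis
    proof (cases rule: less_add_cases[OF ab(2)])
      case 1
      then show ?thesis
        using 2 J v by (simp add: col_hyp_twist form hyp_pow_form_hyp_vec mult_mat_vec_smult
            index_orth_sum[OF l J] sum_negf)
    next
      case (2 c')
      then show ?thesis
        using \<open>a = n + c\<close> \<open>c < j\<close> J v
        by (simp add: col_hyp_twist form hyp_pow_form_hyp_vec index_orth_sum[OF l J])
    qed
  qed
  finally show "(transpose_mat (hyp_twist n J v r S) * (hyp_pow n \<perp>\<^sub>L J) * hyp_twist n J v r S) $$ (a, b)
      = (l \<perp>\<^sub>L J) $$ (a, b)" .
qed (use l J carrier_matD[OF hyp_twist_carrier] in \<open>simp_all add: orth_sum_def\<close>)

end

lemma symmetric_even_diag_split: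
  fixes M :: "nat \<Rightarrow> nat \<Rightarrow> 'a::comm_ring_1"
  assumes sym: "\<And>a b. a < n \<Longrightarrow> b < n \<Longrightarrow> M a b = M b a"
    and even: "\<And>a. a < n \<Longrightarrow> 2 dvd M a a"
  shows "\<exists>S. \<forall>a<n. \<forall>b<n. S a b + S b a = M a b"
proof -
  have "\<forall>a\<in>{..<n}. \<exists>e. M a a = 2 * e" using even by (simp add: dvd_def)
  then obtain d where "\<forall>a\<in>{..<n}. M a a = 2 * d a" by (rule bchoice[THEN exE])
  then have d: "\<And>a. a < n \<Longrightarrow> M a a = 2 * d a" by simp
  define S where "S a b = (if a < b then M a b else if a = b then d a else 0)" for a b
  have "S a b + S b a = M a b" if "a < n" "b < n" for a b
  proof -
    consider "a < b" | "a = b" | "b < a" by linarith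
    then show ?thesis
    proof cases
      case 1 then show ?thesis by (simp add: S_def)
    next
      case 2 then show ?thesis using d[OF that(1)] by (simp add: S_def)
    next
      case 3 then show ?thesis using sym[OF that] by (simp add: S_def)
    qed
  qed
  then show ?thesis by blast
qed

lemma symmetric_split_mod_square:
  assumes l: "l \<in> carrier_mat n n" "transpose_mat l = l"
    and diag: "\<And>a. a < n \<Longrightarrow> \<exists>\<rho>. 2 dvd l $$ (a, a) - \<rho> * \<rho> * (u::'a::comm_ring_1)"
  shows "\<exists>r S. \<forall>a<n. \<forall>b<n. S a b + S b a + r a * r b * u = l $$ (a, b)"
proof -
  have "\<forall>a. \<exists>\<rho>. a < n \<longrightarrow> 2 dvd l $$ (a, a) - \<rho> * \<rho> * u" using diag by blast
  then obtain r where r: "\<forall>a. a < n \<longrightarrow> 2 dvd l $$ (a, a) - r a * r a * u"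
    by (rule choice[THEN exE])
  have sym: "l $$ (a, b) - r a * r b * u = l $$ (b, a) - r b * r a * u" if "a < n" "b < n" for a b
  proof -
    have "l $$ (a, b) = l $$ (b, a)"
      using l that by (metis carrier_matD index_transpose_mat(1))
    then show ?thesis by (simp add: mult.commute)
  qed
  have even: "2 dvd l $$ (a, a) - r a * r a * u" if "a < n" for a
    using r that by blast
  obtain S where S: "\<forall>a<n. \<forall>b<n. S a b + S b a = l $$ (a, b) - r a * r b * u"
    using symmetric_even_diag_split[of n "\<lambda>a b. l $$ (a, b) - r a * r b * u", OF sym even] by blast
  have "\<forall>a<n. \<forall>b<n. S a b + S b a + r a * r b * u = l $$ (a, b)"
    using S by (simp add: algebra_simps)
  then show ?thesis by blast
qed

lemma split_rep_hyp_pow_orth_sum: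
  fixes J :: "'a::comm_ring_1 mat"
  assumes J: "J \<in> carrier_mat j j" "transpose_mat J = J" and v: "v \<in> carrier_vec j"
    and l: "l \<in> carrier_mat n n" "transpose_mat l = l"
    and diag: "\<And>a. a < n \<Longrightarrow> \<exists>\<rho>. 2 dvd l $$ (a, a) - \<rho> * \<rho> * (v \<bullet> (J *\<^sub>v v))"
  shows "split_rep (hyp_pow n \<perp>\<^sub>L J) (l \<perp>\<^sub>L J)"
proof -
  obtain r S where "\<forall>a<n. \<forall>b<n. S a b + S b a + r a * r b * (v \<bullet> (J *\<^sub>v v)) = l $$ (a, b)"
    using symmetric_split_mod_square[OF l diag] by blast
  then have gram: "transpose_mat (hyp_twist n J v r S) * (hyp_pow n \<perp>\<^sub>L J) * hyp_twist n J v r S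
      = l \<perp>\<^sub>L J"
    by (intro gram_hyp_twist[OF J(1) v J(2) l(1)]) blast
  have dims: "dim_row (hyp_pow n \<perp>\<^sub>L J) = 2*n + j" "dim_row (l \<perp>\<^sub>L J) = n + j"
    using J(1) l(1) by (simp_all add: orth_sum_def dim_hyp_pow)
  show ?thesis
    unfolding split_rep_def dims
  proof (intro exI conjI)
    show "hyp_twist n J v r S \<in> carrier_mat (2*n + j) (n + j)"
      by (rule hyp_twist_carrier[OF J(1) v])
    show "hyp_twist_inv n j v r \<in> carrier_mat (n + j) (2*n + j)"
      by (rule hyp_twist_inv_carrier[OF J(1) v])
    show "hyp_twist_inv n j v r * hyp_twist n J v r S = 1\<^sub>m (n + j)"
      by (rule hyp_twist_left_inverse[OF J(1) v])
  qed (fact gram)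
qed

lemma prim_rep_hyp_pow_orth_sum:
  fixes J :: "'a::comm_ring_1 mat"
  assumes J: "J \<in> carrier_mat j j" "transpose_mat J = J" and K: "prim_rep J K"
    and v: "v \<in> carrier_vec j" and squares: "\<And>\<beta>. \<exists>\<rho>. 2 dvd \<beta> - \<rho> * \<rho> * (v \<bullet> (J *\<^sub>v v))"
    and l: "l \<in> carrier_mat n n" "transpose_mat l = l"
  shows "prim_rep (hyp_pow n \<perp>\<^sub>L J) (l \<perp>\<^sub>L K)"
proof (rule prim_rep_trans_split_rep)
  show "hyp_pow n \<perp>\<^sub>L J \<in> carrier_mat (2*n + j) (2*n + j)" using J(1) by simp
  show "split_rep (hyp_pow n \<perp>\<^sub>L J) (l \<perp>\<^sub>L J)"
    using split_rep_hyp_pow_orth_sum[OF J v l] squares by blast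
  show "prim_rep (l \<perp>\<^sub>L J) (l \<perp>\<^sub>L K)"
    by (rule prim_rep_orth_sum[OF l(1) prim_rep_refl[OF l(1)] J(1) K])
qed

lemma prim_universal_hyp_pow_orth_sum:
  fixes J :: "'a::comm_ring_1 mat"
  assumes J: "J \<in> carrier_mat j j" "transpose_mat J = J"
    and v: "v \<in> carrier_vec j" and squares: "\<And>\<beta>. \<exists>\<rho>. 2 dvd \<beta> - \<rho> * \<rho> * (v \<bullet> (J *\<^sub>v v))"
  shows "prim_universal n (hyp_pow n \<perp>\<^sub>L J)"
  unfolding prim_universal_def is_lattice_def
proof (intro allI impI)
  fix l :: "'a mat" assume "(l \<in> carrier_mat n n \<and> transpose_mat l = l) \<and> nondegenerate l"
  then have l: "l \<in> carrier_mat n n" "transpose_mat l = l" by simp_all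
  have "prim_rep (hyp_pow n \<perp>\<^sub>L J) (l \<perp>\<^sub>L 0\<^sub>m 0 0)"
    by (rule prim_rep_hyp_pow_orth_sum[OF J prim_rep_zero[OF J(1)] v squares l])
  then show "prim_rep (hyp_pow n \<perp>\<^sub>L J) l" by (simp add: orth_sum_empty[OF l(1)])
qed

section \<open>Squares modulo 2\<close>

lemma residue_class_eq_iff:
  fixes p :: "'a::comm_ring_1"
  shows "{y. p dvd y - a} = {y. p dvd y - b} \<longleftrightarrow> p dvd a - b"
proof
  assume "{y. p dvd y - a} = {y. p dvd y - b}"
  moreover have "a \<in> {y. p dvd y - a}" by simp
  ultimately show "p dvd a - b" by simp
next
  assume ab: "p dvd a - b"
  have "p dvd y - a \<longleftrightarrow> p dvd y - b" for y
    using dvd_add[OF _ ab, of "y - a"] dvd_diff[OF _ ab, of "y - b"] by auto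
  then show "{y. p dvd y - a} = {y. p dvd y - b}" by auto
qed

lemma exists_square_mod_two:
  fixes S :: "'a::idom set" and \<beta> :: 'a
  assumes two: "prime_elem (2::'a)" and S: "finite S" "\<forall>x. \<exists>s\<in>S. 2 dvd x - s"
  shows "\<exists>r. 2 dvd \<beta> - r * r"
proof -
  let ?p = "2::'a"
  define cls where "cls x = {y. ?p dvd y - x}" for x
  have cls_eq: "cls a = cls b \<longleftrightarrow> ?p dvd a - b" for a b
    unfolding cls_def by (rule residue_class_eq_iff)
  define sq where "sq C = {y. \<exists>x\<in>C. ?p dvd y - x * x}" for C
  have sq_cls: "sq (cls a) = cls (a * a)" for a
  proof -
    have "?p dvd y - a * a" if "?p dvd x - a" "?p dvd y - x * x" for x y
    proof -
      have "y - a * a = (y - x * x) + (x - a) * (x + a)" by (simp add: algebra_simps)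
      then show ?thesis using that by (metis dvd_add dvd_mult2)
    qed
    then show ?thesis unfolding sq_def cls_def by (auto intro!: exI[of _ a])
  qed
  have classes: "cls x \<in> cls ` S" for x
    using S(2) cls_eq by blast
  have "inj_on sq (cls ` S)"
  proof (rule inj_onI)
    fix C D assume CD: "C \<in> cls ` S" "D \<in> cls ` S" "sq C = sq D"
    then obtain a b where ab: "C = cls a" "D = cls b" by blast
    then have "?p dvd a * a - b * b" using CD(3) sq_cls cls_eq by simp
    moreover have "(a - b) * (a - b) = (a * a - b * b) - ?p * (b * (a - b))" by (simp add: algebra_simps)
    ultimately have "?p dvd (a - b) * (a - b)" by simp
    then show "C = D" using ab cls_eq two prime_elem_dvd_mult_iff by blast
  qed
  moreover have "sq ` cls ` S \<subseteq> cls ` S" using sq_cls classes by auto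
  ultimately have "sq ` cls ` S = cls ` S" using S(1) by (simp add: endo_inj_surj)
  then obtain a where "sq (cls a) = cls \<beta>" using classes by (metis imageE)
  then have "?p dvd \<beta> - a * a" using sq_cls cls_eq by metis
  then show ?thesis by blast
qed

lemma finite_residues_mod_prime:
  assumes R: "nonarch_local_int_ring TYPE('a::idom)" and p: "prime_elem (p::'a)"
  obtains S where "finite S" "\<forall>x. \<exists>s\<in>S. p dvd x - s"
proof -
  obtain \<pi> :: 'a and S where fact: "\<forall>x. x \<noteq> 0 \<longrightarrow> (\<exists>u n. u dvd 1 \<and> x = u * \<pi> ^ n)"
    and S: "finite S" "\<forall>x. \<exists>s\<in>S. \<pi> dvd x - s"
    using R unfolding nonarch_local_int_ring_def by blast
  obtain w n where w: "w dvd 1" "p = w * \<pi> ^ n"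
    using fact prime_elem_not_zeroI[OF p] by blast
  have "\<not> p dvd w" using w(1) p by (meson dvd_trans prime_elem_not_unit)
  moreover have "p dvd w * \<pi> ^ n" using w(2) by simp
  ultimately have "p dvd \<pi> ^ n" using p by (simp add: prime_elem_dvd_mult_iff)
  then have "p dvd \<pi>" by (rule prime_elem_dvd_power[OF p])
  then have "\<forall>x. \<exists>s\<in>S. p dvd x - s" using S(2) by (meson dvd_trans)
  with S(1) show ?thesis by (rule that)
qed

lemma exists_unit_square_mod_two:
  assumes R: "nonarch_local_int_ring TYPE('a::idom)" and two: "prime_elem (2::'a)"
    and u: "u dvd 1"
  shows "\<exists>\<rho>. 2 dvd \<beta> - \<rho> * \<rho> * (u::'a)"
proof -
  obtain u' where u': "u * u' = 1" using u by (metis dvdE)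
  obtain S :: "'a set" where "finite S" "\<forall>x. \<exists>s\<in>S. 2 dvd x - s"
    using finite_residues_mod_prime[OF R two] by blast
  then obtain \<rho> where "2 dvd \<beta> * u' - \<rho> * \<rho>"
    using exists_square_mod_two[OF two] by blast
  moreover have "\<beta> - \<rho> * \<rho> * u = u * (\<beta> * u' - \<rho> * \<rho>)"
    using u' by (simp add: algebra_simps)
  ultimately have "2 dvd \<beta> - \<rho> * \<rho> * u" by (metis dvd_mult)
  then show ?thesis by blast
qed

(* The columns e + t f + z w, e + (t - 1) f + z w and w - eps z f of X have norms 1, -1, eps. *)
lemma isometric_hyp_plane_orth:
  fixes \<epsilon> z t :: "'a::comm_ring_1"
  assumes rel: "\<epsilon> * z * z + 2 * t = 1"
  shows "isometric (hyp_plane \<perp>\<^sub>L diag_lat [\<epsilon>]) (diag_lat [1, -1, \<epsilon>])"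
proof -
  define X :: "'a mat" where "X = mat_of_rows_list 3 [[1, 1, 0], [t, t - 1, - (\<epsilon> * z)], [z, z, 1]]"
  define Y :: "'a mat" where "Y = mat_of_rows_list 3
    [[1 - t - \<epsilon> * z * z, 1, \<epsilon> * z], [t + \<epsilon> * z * z, -1, - (\<epsilon> * z)], [- z, 0, 1]]"
  have G: "hyp_plane \<perp>\<^sub>L diag_lat [\<epsilon>] = mat_of_rows_list 3 [[0, 1, 0], [1, 0, 0], [0, 0, \<epsilon>]]"
    by (rule eq_matI) (auto simp: orth_sum_def hyp_plane_def diag_lat_def mat_of_rows_list_def
        less_Suc_eq numeral_3_eq_3 numeral_2_eq_2)
  have three: "i < 3 \<longleftrightarrow> i = 0 \<or> i = 1 \<or> i = (2::nat)" for i by auto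
  have sum3: "(\<Sum>k\<in>{0..<3::nat}. f k) = f 0 + f 1 + (f 2 :: 'a)" for f
    by (simp add: numeral_3_eq_3 numeral_2_eq_2 add.assoc)
  have "X * Y = 1\<^sub>m 3" "Y * X = 1\<^sub>m 3"
    by (rule eq_matI; auto simp: X_def Y_def mat_of_rows_list_def scalar_prod_def sum3 three algebra_simps)+
  moreover have "X \<in> carrier_mat 3 3" "Y \<in> carrier_mat 3 3"
    by (simp_all add: X_def Y_def mat_of_rows_list_def numeral_3_eq_3)
  moreover have "transpose_mat X * (hyp_plane \<perp>\<^sub>L diag_lat [\<epsilon>]) * X = diag_lat [1, -1, \<epsilon>]"
  proof (rule eq_matI)
    fix i k assume "i < dim_row (diag_lat [1, -1, \<epsilon>])" "k < dim_col (diag_lat [1, -1, \<epsilon>])"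
    then have ik: "i < 3" "k < 3" by (simp_all add: diag_lat_def)
    have "X \<in> carrier_mat 3 3" by (simp add: X_def mat_of_rows_list_def numeral_3_eq_3)
    moreover have "mat_of_rows_list 3 [[0, 1, 0], [1, 0, 0], [0, 0, \<epsilon>]] \<in> carrier_mat 3 3"
      by (simp add: mat_of_rows_list_def numeral_3_eq_3)
    ultimately have "(transpose_mat X * (hyp_plane \<perp>\<^sub>L diag_lat [\<epsilon>]) * X) $$ (i, k)
        = col X i \<bullet> (mat_of_rows_list 3 [[0, 1, 0], [1, 0, 0], [0, 0, \<epsilon>]] *\<^sub>v col X k)"
      unfolding G using ik by (intro gram_entry)
    also have "\<dots> = diag_lat [1, -1, \<epsilon>] $$ (i, k)"
      using ik rel
      by (auto simp: X_def mat_of_rows_list_def diag_lat_def scalar_prod_def sum3 three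
          mult_mat_vec_def algebra_simps)
    finally show "(transpose_mat X * (hyp_plane \<perp>\<^sub>L diag_lat [\<epsilon>]) * X) $$ (i, k)
        = diag_lat [1, -1, \<epsilon>] $$ (i, k)" .
  qed (simp_all add: X_def diag_lat_def mat_of_rows_list_def)
  moreover have dims: "dim_row (hyp_plane \<perp>\<^sub>L diag_lat [\<epsilon>]) = 3" "dim_row (diag_lat [1, -1, \<epsilon>]) = 3"
    by (simp_all add: orth_sum_def hyp_plane_def diag_lat_def)
  ultimately show ?thesis
    unfolding isometric_def dims by blast
qed

lemma hyp_pow_one: "hyp_pow 1 = hyp_plane"
  by (rule eq_matI) (auto simp: orth_sum_def hyp_plane_def)

lemma diag_lat_orth_sum: "diag_lat [\<alpha>] \<perp>\<^sub>L diag_lat [\<epsilon>] = diag_lat [\<alpha>, \<epsilon>]"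
  by (rule eq_matI) (auto simp: orth_sum_def diag_lat_def less_Suc_eq)

lemma hyp_plane_orth_unit:
  assumes R: "nonarch_local_int_ring TYPE('a::idom)" and two: "prime_elem (2::'a)"
    and \<epsilon>: "(\<epsilon>::'a) dvd 1"
  shows "isometric (hyp_plane \<perp>\<^sub>L diag_lat [\<epsilon>]) (diag_lat [1, -1, \<epsilon>])"
    and "prim_rep (hyp_plane \<perp>\<^sub>L diag_lat [\<epsilon>]) (diag_lat [\<alpha>, \<epsilon>])"
    and "prim_universal 1 (hyp_plane \<perp>\<^sub>L diag_lat [\<epsilon>])"
proof -
  have diag: "diag_lat [a] \<in> carrier_mat 1 1" "transpose_mat (diag_lat [a]) = diag_lat [a]" for a :: 'a
    by (auto simp: diag_lat_def)
  have e: "unit_vec 1 0 \<bullet> (diag_lat [\<epsilon>] *\<^sub>v unit_vec 1 0) = \<epsilon>"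
    by (simp add: diag_lat_def scalar_prod_def)
  have squares: "\<And>\<beta>. \<exists>\<rho>. 2 dvd \<beta> - \<rho> * \<rho> * (unit_vec 1 0 \<bullet> (diag_lat [\<epsilon>] *\<^sub>v unit_vec 1 0))"
    unfolding e by (rule exists_unit_square_mod_two[OF R two \<epsilon>])
  obtain z t where "1 - z * z * \<epsilon> = 2 * t"
    using exists_unit_square_mod_two[OF R two \<epsilon>, of 1] by (auto simp: dvd_def)
  then have "\<epsilon> * z * z + 2 * t = 1" by (simp add: algebra_simps)
  then show "isometric (hyp_plane \<perp>\<^sub>L diag_lat [\<epsilon>]) (diag_lat [1, -1, \<epsilon>])"
    by (rule isometric_hyp_plane_orth)
  show "prim_rep (hyp_plane \<perp>\<^sub>L diag_lat [\<epsilon>]) (diag_lat [\<alpha>, \<epsilon>])"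
    using prim_rep_hyp_pow_orth_sum[OF diag prim_rep_refl[OF diag(1)] unit_vec_carrier squares diag]
    by (simp only: hyp_pow_one diag_lat_orth_sum)
  show "prim_universal 1 (hyp_plane \<perp>\<^sub>L diag_lat [\<epsilon>])"
    using prim_universal_hyp_pow_orth_sum[OF diag unit_vec_carrier squares, of 1]
    by (simp only: hyp_pow_one)
qed

lemma hyp_pow_orth_sum_unit:
  assumes R: "nonarch_local_int_ring TYPE('a::idom)" and two: "prime_elem (2::'a)"
    and J: "is_lattice j J" and K: "prim_rep J K" and u: "(u::'a) dvd 1" "prim_rep_elem J u"
  shows "is_lattice n l \<Longrightarrow> prim_rep (hyp_pow n \<perp>\<^sub>L J) (l \<perp>\<^sub>L K)"
    and "prim_universal n (hyp_pow n \<perp>\<^sub>L J)"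
proof -
  have J': "J \<in> carrier_mat j j" "transpose_mat J = J" using J by (simp_all add: is_lattice_def)
  then obtain v where v: "v \<in> carrier_vec j" "v \<bullet> (J *\<^sub>v v) = u"
    using u(2) unfolding prim_rep_elem_def by auto
  have squares: "\<And>\<beta>. \<exists>\<rho>. 2 dvd \<beta> - \<rho> * \<rho> * (v \<bullet> (J *\<^sub>v v))"
    unfolding v(2) by (rule exists_unit_square_mod_two[OF R two u(1)])
  show "prim_rep (hyp_pow n \<perp>\<^sub>L J) (l \<perp>\<^sub>L K)" if "is_lattice n l"
    using prim_rep_hyp_pow_orth_sum[OF J' K v(1) squares] that by (simp add: is_lattice_def)
  show "prim_universal n (hyp_pow n \<perp>\<^sub>L J)"
    by (rule prim_universal_hyp_pow_orth_sum[OF J' v(1) squares])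
qed

theorem lemma5p2:
  assumes R: "nonarch_local_int_ring TYPE('a::idom)"
    and char: "(2::'a) \<noteq> 0"
    and two_prime: "prime_elem (2::'a)"
  shows "(\<forall>\<epsilon>::'a. \<epsilon> dvd 1 \<longrightarrow>
            isometric (hyp_plane \<perp>\<^sub>L diag_lat [\<epsilon>]) (diag_lat [1, -1, \<epsilon>])
          \<and> (\<forall>\<alpha>. prim_rep (hyp_plane \<perp>\<^sub>L diag_lat [\<epsilon>]) (diag_lat [\<alpha>, \<epsilon>]))
          \<and> prim_universal 1 (hyp_plane \<perp>\<^sub>L diag_lat [\<epsilon>]))
       \<and> (\<forall>(J::'a mat) j K k. is_lattice j J \<and> is_lattice k K \<and> prim_rep J K
            \<and> (\<exists>u. u dvd 1 \<and> prim_rep_elem J u) \<longrightarrow>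
            (\<forall>n\<ge>1. (\<forall>l. is_lattice n l \<longrightarrow> prim_rep (hyp_pow n \<perp>\<^sub>L J) (l \<perp>\<^sub>L K))
                  \<and> prim_universal n (hyp_pow n \<perp>\<^sub>L J)))"
proof (intro conjI allI impI)
  fix \<epsilon> :: 'a assume "\<epsilon> dvd 1"
  note a = hyp_plane_orth_unit[OF R two_prime this]
  show "isometric (hyp_plane \<perp>\<^sub>L diag_lat [\<epsilon>]) (diag_lat [1, -1, \<epsilon>])" by (rule a(1))
  show "prim_rep (hyp_plane \<perp>\<^sub>L diag_lat [\<epsilon>]) (diag_lat [\<alpha>, \<epsilon>])" for \<alpha> by (rule a(2))
  show "prim_universal 1 (hyp_plane \<perp>\<^sub>L diag_lat [\<epsilon>])" by (rule a(3))
next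
  fix J :: "'a mat" and j K k n
  assume "is_lattice j J \<and> is_lattice k K \<and> prim_rep J K \<and> (\<exists>u. u dvd 1 \<and> prim_rep_elem J u)"
  then obtain u where J: "is_lattice j J" "prim_rep J K" and u: "u dvd 1" "prim_rep_elem J u"
    by blast
  note b = hyp_pow_orth_sum_unit[OF R two_prime J u]
  show "prim_rep (hyp_pow n \<perp>\<^sub>L J) (l \<perp>\<^sub>L K)" if "is_lattice n l" for l by (rule b(1)[OF that])
  show "prim_universal n (hyp_pow n \<perp>\<^sub>L J)" by (rule b(2))
qed

end
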